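(* Suppose the reward-free MDP $M$ has low-rank structure: for all $h$, $P^M_{h-1}(x_h\mid x_{h-1},a_{h-1})=\langle\phi_{h-1}(x_{h-1},a_{h-1}),\psi_h(x_h)\rangle$ for feature maps $\phi_{h-1}(x,a),\psi_h(x)\in\mathbb{R}^d$. Let $\Pi\subseteq\Pi_{\mathrm{RNS}}$. Then for all $h\in[H]$, $C^M_{1;h}\le|\mathcal{A}|\cdot C^M_{\mathrm{feat};h-1}$, and consequently, for all $\varepsilon>0$, $$\mathsf{Cov}^M_{h,\varepsilon}\le 1+2\sqrt{\frac{|\mathcal{A}|\cdot C^M_{\mathrm{feat};h-1}}{\varepsilon}}.$$
   Context: Episodic reward-free MDP $M$ (countable $\mathcal{X}$, actions $\mathcal{A}$, horizon $H$, transitions $P^M_h$); $\Pi_{\mathrm{RNS}}$ randomized non-stationary policies; $d^{M,\pi}_h(x,a)$ layer-$h$ occupancy, $d^{M,p}_h=\mathbb{E}_{\pi\sim p}d^{M,\pi}_h$. Definitions: $\Psi^M_{h,\varepsilon}(p)=\sup_{\pi\in\Pi}\mathbb{E}^{M,\pi}\big[\frac{d^{M,\pi}_h(x_h,a_h)}{d^{M,p}_h(x_h,a_h)+\varepsilon d^{M,\pi}_h(x_h,a_h)}\big]$; $\mathsf{Cov}^M_{h,\varepsilon}=\inf_{p\in\Delta(\Pi)}\Psi^M_{h,\varepsilon}(p)$; $C^M_{1;h}=\inf_{\mu\in\Delta(\mathcal{X}\times\mathcal{A})}\sup_{\pi\in\Pi}\mathbb{E}^{M,\pi}\big[\frac{d^{M,\pi}_h(x_h,a_h)}{\mu(x_h,a_h)}\big]$;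 feature coverability $C^M_{\mathrm{feat};h}=\inf_{\mu\in\Delta(\mathcal{X}\times\mathcal{A})}\sup_{\pi\in\Pi}\big\|\mathbb{E}^{M,\pi}[\phi_h(x_h,a_h)]\big\|^2_{\Sigma_\mu^{-1}}$ where $\Sigma_\mu=\mathbb{E}_{(x,a)\sim\mu}[\phi_h(x,a)\phi_h(x,a)^\top]$. *)

theory Defs
  imports "HOL-Analysis.Analysis" "HOL-Probability.Probability"
begin

text \<open>Episodic reward-free MDP with countable state type 'x, finite action type 'a,
  initial state distribution rho (layer 1) and transition kernels P h x a (from layer h
  to layer h+1).  Layers are numbered 1, 2, ..., H.\<close>

type_synonym ('x,'a) policy = "nat \<Rightarrow> 'x \<Rightarrow> 'a pmf"
  \<comment> \<open>randomized non-stationary (Markov) policy: pi h x is the action distribution at layer h\<close>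

fun state_dist :: "'x pmf \<Rightarrow> (nat \<Rightarrow> 'x \<Rightarrow> 'a \<Rightarrow> 'x pmf) \<Rightarrow> ('x,'a) policy \<Rightarrow> nat \<Rightarrow> 'x pmf" where
  "state_dist \<rho> P \<pi> 0 = \<rho>"   \<comment> \<open>layer 0 unused\<close>
| "state_dist \<rho> P \<pi> (Suc 0) = \<rho>"
| "state_dist \<rho> P \<pi> (Suc (Suc h)) =
     bind_pmf (state_dist \<rho> P \<pi> (Suc h)) (\<lambda>x. bind_pmf (\<pi> (Suc h) x) (\<lambda>a. P (Suc h) x a))"

definition occ :: "'x pmf \<Rightarrow> (nat \<Rightarrow> 'x \<Rightarrow> 'a \<Rightarrow> 'x pmf) \<Rightarrow> ('x,'a) policy \<Rightarrow> nat \<Rightarrow> ('x \<times> 'a) pmf" where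
  "occ \<rho> P \<pi> h = bind_pmf (state_dist \<rho> P \<pi> h) (\<lambda>x. map_pmf (\<lambda>a. (x, a)) (\<pi> h x))"

definition occ_mix :: "'x pmf \<Rightarrow> (nat \<Rightarrow> 'x \<Rightarrow> 'a \<Rightarrow> 'x pmf) \<Rightarrow> ('x,'a) policy pmf \<Rightarrow> nat \<Rightarrow> ('x \<times> 'a) pmf" where
  "occ_mix \<rho> P p h = bind_pmf p (\<lambda>\<pi>. occ \<rho> P \<pi> h)"

definition Psi :: "'x pmf \<Rightarrow> (nat \<Rightarrow> 'x \<Rightarrow> 'a \<Rightarrow> 'x pmf) \<Rightarrow> ('x,'a) policy set \<Rightarrow> nat \<Rightarrow> real
                    \<Rightarrow> ('x,'a) policy pmf \<Rightarrow> ennreal" where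
  "Psi \<rho> P Pols h \<epsilon> p = (SUP \<pi>\<in>Pols. \<integral>\<^sup>+ z. ennreal (pmf (occ \<rho> P \<pi> h) z /
        (pmf (occ_mix \<rho> P p h) z + \<epsilon> * pmf (occ \<rho> P \<pi> h) z)) \<partial>measure_pmf (occ \<rho> P \<pi> h))"

definition Cov :: "'x pmf \<Rightarrow> (nat \<Rightarrow> 'x \<Rightarrow> 'a \<Rightarrow> 'x pmf) \<Rightarrow> ('x,'a) policy set \<Rightarrow> nat \<Rightarrow> real \<Rightarrow> ennreal" where
  "Cov \<rho> P Pols h \<epsilon> = (INF p\<in>{p. set_pmf p \<subseteq> Pols}. Psi \<rho> P Pols h \<epsilon> p)"

text \<open>C^M_{1;h}; the ratio is taken in ennreal, so a/0 = \<infinity> for a > 0\<close>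
definition C1 :: "'x pmf \<Rightarrow> (nat \<Rightarrow> 'x \<Rightarrow> 'a \<Rightarrow> 'x pmf) \<Rightarrow> ('x,'a) policy set \<Rightarrow> nat \<Rightarrow> ennreal" where
  "C1 \<rho> P Pols h = (INF \<mu>\<in>(UNIV :: ('x \<times> 'a) pmf set). SUP \<pi>\<in>Pols.
      \<integral>\<^sup>+ z. ennreal (pmf (occ \<rho> P \<pi> h) z) / ennreal (pmf \<mu> z) \<partial>measure_pmf (occ \<rho> P \<pi> h))"

definition feat_cov :: "('x \<times> 'a) pmf \<Rightarrow> ('x \<Rightarrow> 'a \<Rightarrow> real^'d) \<Rightarrow> real^'d^'d" where
  "feat_cov \<mu> \<phi> = (\<integral> z. (\<chi> i j. \<phi> (fst z) (snd z) $ i * \<phi> (fst z) (snd z) $ j) \<partial>measure_pmf \<mu>)"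

definition feat_cov_ok :: "('x \<times> 'a) pmf \<Rightarrow> ('x \<Rightarrow> 'a \<Rightarrow> real^'d) \<Rightarrow> bool" where
  "feat_cov_ok \<mu> \<phi> \<longleftrightarrow>
     integrable (measure_pmf \<mu>) (\<lambda>z. (\<chi> i j. \<phi> (fst z) (snd z) $ i * \<phi> (fst z) (snd z) $ j) :: real^'d^'d)
     \<and> invertible (feat_cov \<mu> \<phi>)"

definition feat_norm :: "'x pmf \<Rightarrow> (nat \<Rightarrow> 'x \<Rightarrow> 'a \<Rightarrow> 'x pmf) \<Rightarrow> (nat \<Rightarrow> 'x \<Rightarrow> 'a \<Rightarrow> real^'d)
                          \<Rightarrow> nat \<Rightarrow> ('x \<times> 'a) pmf \<Rightarrow> ('x,'a) policy \<Rightarrow> ennreal" where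
  "feat_norm \<rho> P \<phi> h \<mu> \<pi> =
     (if integrable (measure_pmf (occ \<rho> P \<pi> h)) (\<lambda>z. \<phi> h (fst z) (snd z))
      then (let v = (\<integral> z. \<phi> h (fst z) (snd z) \<partial>measure_pmf (occ \<rho> P \<pi> h))
            in ennreal (v \<bullet> (matrix_inv (feat_cov \<mu> (\<phi> h)) *v v)))
      else \<top>)"

definition Cfeat :: "'x pmf \<Rightarrow> (nat \<Rightarrow> 'x \<Rightarrow> 'a \<Rightarrow> 'x pmf) \<Rightarrow> ('x,'a) policy set
                      \<Rightarrow> (nat \<Rightarrow> 'x \<Rightarrow> 'a \<Rightarrow> real^'d) \<Rightarrow> nat \<Rightarrow> ennreal" where
  "Cfeat \<rho> P Pols \<phi> h = (INF \<mu>\<in>{\<mu>. feat_cov_ok \<mu> (\<phi> h)}. SUP \<pi>\<in>Pols. feat_norm \<rho> P \<phi> h \<mu> \<pi>)"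

end

theory Submission
  imports Defs
begin

text \<open>
  Under the low-rank assumption the layer-h state density of \<pi> is d(x) = v \<bullet> \<psi>(x) with
  v = E[\<phi>] under \<pi>.  For any \<nu> with invertible feature covariance Sigma, write v = Sigma u;
  then d(x) = E_\<nu>[(\<phi> \<bullet> u) P(x | .)], so Cauchy-Schwarz against the state density \<nu>P of \<nu>
  pushed through the transitions bounds the sum over x of d(x)^2 / (\<nu>P)(x) by
  E_\<nu>[(\<phi> \<bullet> u)^2] = v \<bullet> Sigma^-1 v.  Choosing the actions uniformly costs a factor |A|.

  For the second bound, take \<mu> with E_\<pi>[d_\<pi> / \<mu>] \<le> C for all \<pi> and a finite set Z carrying
  almost all of \<mu>.  The potential \<Phi>(p) = sum over z in Z of \<mu>(z) ln (d_p(z) + \<theta> \<mu>(z)) is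
  bounded above, and mixing a policy \<pi> into p increases it unless \<pi> is already covered by p
  in a smoothed sense.  Hence a near-maximiser p of \<Phi> covers every \<pi>, and AM-GM turns this
  and the bound C into \<Psi>(p) \<le> sqrt (3 C / \<epsilon>) + 2/3.
\<close>

lemma pmf_bind_map_Pair:
  "pmf (bind_pmf S (\<lambda>x. map_pmf (Pair x) (K x))) (x, a) = pmf S x * pmf (K x) a"
proof -
  have "pmf (map_pmf (Pair y) (K y)) (x, a) = indicator {x} y * pmf (K x) a" for y
    by (cases "y = x") (auto simp: pmf_map_inj' inj_on_def pmf_eq_0_set_pmf)
  then have "pmf (bind_pmf S (\<lambda>x. map_pmf (Pair x) (K x))) (x, a) = measure S {x} * pmf (K x) a"
    by (simp add: pmf_bind)
  then show ?thesis
    by (simp add: measure_pmf_single)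
qed

lemma state_dist_Suc_eq_bind_occ:
  "k \<ge> 1 \<Longrightarrow> state_dist \<rho> P \<pi> (Suc k) = bind_pmf (occ \<rho> P \<pi> k) (case_prod (P k))"
  by (cases k) (auto simp: occ_def bind_assoc_pmf bind_map_pmf)

lemma matrix_mult_matrix_inv:
  assumes "invertible (A :: 'b::field^'n^'n)"
  shows "A ** matrix_inv A = mat 1"
  using assms unfolding invertible_def matrix_inv_def
  by (rule someI_ex[where P = "\<lambda>A'. A ** A' = mat 1 \<and> A' ** A = mat 1", THEN conjunct1])

lemma second_moment_inner:
  fixes f :: "'z \<Rightarrow> real^'d" and u y :: "real^'d"
  assumes "integrable M (\<lambda>z. (\<chi> i j. f z $ i * f z $ j) :: real^'d^'d)"
  shows integrable_second_moment_inner: "integrable M (\<lambda>z. (f z \<bullet> u) * (f z \<bullet> y))"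
    and integral_second_moment_inner:
      "(integral\<^sup>L M (\<lambda>z. (\<chi> i j. f z $ i * f z $ j) :: real^'d^'d) *v u) \<bullet> y
        = (\<integral>z. (f z \<bullet> u) * (f z \<bullet> y) \<partial>M)"
proof -
  define T where "T A = (A *v u) \<bullet> y" for A :: "real^'d^'d"
  have "linear T"
    unfolding T_def
    by (rule linearI) (simp_all add: matrix_vector_mult_add_rdistrib inner_add_left
        scaleR_matrix_vector_assoc[symmetric])
  then have T: "bounded_linear T"
    by (simp add: linear_conv_bounded_linear)
  have T_outer: "T (\<chi> i j. f z $ i * f z $ j) = (f z \<bullet> u) * (f z \<bullet> y)" for z
    by (simp add: T_def matrix_vector_mult_def inner_vec_def sum_distrib_left sum_distrib_right
        algebra_simps)
  show "integrable M (\<lambda>z. (f z \<bullet> u) * (f z \<bullet> y))"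
    using integrable_bounded_linear[OF T assms] unfolding T_outer .
  show "(integral\<^sup>L M (\<lambda>z. (\<chi> i j. f z $ i * f z $ j) :: real^'d^'d) *v u) \<bullet> y
        = (\<integral>z. (f z \<bullet> u) * (f z \<bullet> y) \<partial>M)"
    using integral_bounded_linear[OF T assms] unfolding T_outer by (simp add: T_def)
qed

lemma weighted_Cauchy_Schwarz_integral:
  fixes w Q :: "'z \<Rightarrow> real"
  assumes Q_nonneg: "\<And>z. Q z \<ge> 0"
    and "integrable M (\<lambda>z. w z ^ 2 * Q z)" "integrable M (\<lambda>z. w z * Q z)" "integrable M Q"
  shows "(\<integral>z. w z * Q z \<partial>M)\<^sup>2 \<le> (\<integral>z. w z ^ 2 * Q z \<partial>M) * (\<integral>z. Q z \<partial>M)"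
proof -
  define A where "A = (\<integral>z. w z ^ 2 * Q z \<partial>M)"
  define E where "E = (\<integral>z. w z * Q z \<partial>M)"
  define B where "B = (\<integral>z. Q z \<partial>M)"
  have discr: "0 \<le> A - 2 * t * E + t\<^sup>2 * B" for t
  proof -
    have "0 \<le> (\<integral>z. (w z - t)\<^sup>2 * Q z \<partial>M)"
      using Q_nonneg by (intro integral_nonneg_AE) auto
    also have "(\<lambda>z. (w z - t)\<^sup>2 * Q z) = (\<lambda>z. w z ^ 2 * Q z - (2 * t) * (w z * Q z) + t\<^sup>2 * Q z)"
      by (auto simp: power2_eq_square algebra_simps)
    finally show ?thesis
      unfolding A_def E_def B_def using assms(2-) by simp
  qed
  have "B \<ge> 0"
    unfolding B_def using Q_nonneg by (intro integral_nonneg_AE) auto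
  show ?thesis
  proof (cases "B = 0")
    case True
    have "E = 0"
    proof (rule ccontr)
      assume "E \<noteq> 0"
      then have "A - 2 * ((A + 1) / (2 * E)) * E + ((A + 1) / (2 * E))\<^sup>2 * B = -1"
        using True by (simp add: field_simps)
      with discr show False
        by (metis neg_0_le_iff_le not_one_le_zero)
    qed
    then show ?thesis
      using True by (simp add: E_def B_def)
  next
    case False
    with \<open>B \<ge> 0\<close> have "B > 0" by simp
    have "0 \<le> A - 2 * (E / B) * E + (E / B)\<^sup>2 * B"
      by (rule discr)
    also have "\<dots> = (A * B - E\<^sup>2) / B"
      using \<open>B > 0\<close> by (simp add: field_simps power2_eq_square)
    finally show ?thesis
      using \<open>B > 0\<close> by (simp add: A_def B_def E_def zero_le_divide_iff)
  qed
qed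

lemma nn_integral_count_space_integral_kernel:
  fixes K :: "'z \<Rightarrow> 't::countable pmf" and g :: "'z \<Rightarrow> real"
  assumes g_nonneg: "\<And>z. g z \<ge> 0" and g_int: "integrable (measure_pmf \<nu>) g"
  shows "(\<integral>\<^sup>+t. ennreal (\<integral>z. g z * pmf (K z) t \<partial>\<nu>) \<partial>count_space UNIV) = ennreal (\<integral>z. g z \<partial>\<nu>)"
proof -
  have int_t: "integrable (measure_pmf \<nu>) (\<lambda>z. g z * pmf (K z) t)" for t
    by (rule Bochner_Integration.integrable_bound[OF g_int])
       (auto simp: g_nonneg abs_mult pmf_le_1 intro!: mult_left_le)
  have "(\<integral>\<^sup>+t. ennreal (\<integral>z. g z * pmf (K z) t \<partial>\<nu>) \<partial>count_space UNIV)
      = (\<integral>\<^sup>+t. \<integral>\<^sup>+z. ennreal (g z * pmf (K z) t) \<partial>\<nu> \<partial>count_space UNIV)"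
    using int_t g_nonneg by (intro nn_integral_cong nn_integral_eq_integral[symmetric]) auto
  also have "\<dots> = (\<integral>\<^sup>+z. \<integral>\<^sup>+t. ennreal (g z) * ennreal (pmf (K z) t) \<partial>count_space UNIV \<partial>\<nu>)"
    by (subst nn_integral_count_space_nn_integral) (auto simp: ennreal_mult g_nonneg)
  also have "\<dots> = (\<integral>\<^sup>+z. ennreal (g z) \<partial>\<nu>)"
    by (simp add: nn_integral_cmult nn_integral_pmf measure_pmf.emeasure_space_1[simplified])
  also have "\<dots> = ennreal (\<integral>z. g z \<partial>\<nu>)"
    using g_int g_nonneg by (intro nn_integral_eq_integral) auto
  finally show ?thesis .
qed

lemma ennreal_mult_divide_le_of_square_le:
  fixes x y A :: real
  assumes "x\<^sup>2 \<le> A * y" "x \<ge> 0" "y \<ge> 0"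
  shows "ennreal x * (ennreal x / ennreal y) \<le> ennreal A"
proof (cases "y = 0")
  case True
  then show ?thesis using assms by simp
next
  case False
  with assms have "x * (x / y) \<le> A"
    by (simp add: field_simps power2_eq_square)
  with assms False show ?thesis
    by (simp add: divide_ennreal ennreal_mult'[symmetric] ennreal_leI del: times_divide_eq_right)
qed

lemma pmf_bind_low_rank_eq_integral:
  fixes \<nu> d :: "('s \<times> 'a) pmf" and K :: "'s \<Rightarrow> 'a \<Rightarrow> 't pmf"
    and \<phi> :: "'s \<Rightarrow> 'a \<Rightarrow> real^'d" and \<psi> :: "'t \<Rightarrow> real^'d"
  assumes low_rank: "\<And>s a t. pmf (K s a) t = \<phi> s a \<bullet> \<psi> t"
    and ok: "feat_cov_ok \<nu> \<phi>"
    and int: "integrable (measure_pmf d) (\<lambda>z. \<phi> (fst z) (snd z))"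
  defines "u \<equiv> matrix_inv (feat_cov \<nu> \<phi>) *v (\<integral>z. \<phi> (fst z) (snd z) \<partial>measure_pmf d)"
  shows "pmf (bind_pmf d (case_prod K)) t = (\<integral>z. (\<phi> (fst z) (snd z) \<bullet> u) * pmf (case_prod K z) t \<partial>\<nu>)"
proof -
  define f where "f z = \<phi> (fst z) (snd z)" for z
  have second_moment: "integrable \<nu> (\<lambda>z. (\<chi> i j. f z $ i * f z $ j) :: real^'d^'d)"
    using ok unfolding feat_cov_ok_def f_def by simp
  have "feat_cov \<nu> \<phi> *v u = (\<integral>z. f z \<partial>d)"
    using ok unfolding u_def matrix_vector_mul_assoc feat_cov_ok_def f_def
    by (simp add: matrix_mult_matrix_inv)
  have "pmf (bind_pmf d (case_prod K)) t = (\<integral>z. f z \<bullet> \<psi> t \<partial>d)"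
    by (simp add: pmf_bind low_rank f_def split_beta)
  also have "\<dots> = (feat_cov \<nu> \<phi> *v u) \<bullet> \<psi> t"
    using int unfolding \<open>feat_cov \<nu> \<phi> *v u = (\<integral>z. f z \<partial>d)\<close> f_def by simp
  also have "\<dots> = (\<integral>z. (f z \<bullet> u) * (f z \<bullet> \<psi> t) \<partial>\<nu>)"
    unfolding feat_cov_def f_def[symmetric] integral_second_moment_inner[OF second_moment] ..
  finally show ?thesis
    by (simp add: low_rank f_def split_beta)
qed

lemma low_rank_bind_ratio_le:
  fixes \<nu> d :: "('s \<times> 'a) pmf" and K :: "'s \<Rightarrow> 'a \<Rightarrow> 't::countable pmf"
    and \<phi> :: "'s \<Rightarrow> 'a \<Rightarrow> real^'d" and \<psi> :: "'t \<Rightarrow> real^'d"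
  assumes low_rank: "\<And>s a t. pmf (K s a) t = \<phi> s a \<bullet> \<psi> t"
    and ok: "feat_cov_ok \<nu> \<phi>"
    and int: "integrable (measure_pmf d) (\<lambda>z. \<phi> (fst z) (snd z))"
  defines "v \<equiv> \<integral>z. \<phi> (fst z) (snd z) \<partial>measure_pmf d"
    and "q \<equiv> bind_pmf d (case_prod K)"
    and "r \<equiv> bind_pmf \<nu> (case_prod K)"
  shows "(\<integral>\<^sup>+t. ennreal (pmf q t) / ennreal (pmf r t) \<partial>measure_pmf q)
           \<le> ennreal (v \<bullet> (matrix_inv (feat_cov \<nu> \<phi>) *v v))"
proof -
  define u where "u = matrix_inv (feat_cov \<nu> \<phi>) *v v"
  define w where "w z = \<phi> (fst z) (snd z) \<bullet> u" for z
  define Q where "Q t z = pmf (case_prod K z) t" for t z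
  define A where "A t = (\<integral>z. (w z)\<^sup>2 * Q t z \<partial>\<nu>)" for t
  have second_moment: "integrable \<nu> (\<lambda>z. (\<chi> i j. \<phi> (fst z) (snd z) $ i * \<phi> (fst z) (snd z) $ j) :: real^'d^'d)"
    using ok unfolding feat_cov_ok_def by simp
  have Q_bounds: "0 \<le> Q t z" "Q t z \<le> 1" for t z
    unfolding Q_def by (simp_all add: pmf_le_1)
  have int_wQ: "integrable \<nu> (\<lambda>z. w z * Q t z)" for t
    unfolding w_def Q_def using integrable_second_moment_inner[OF second_moment]
    by (simp add: low_rank split_beta)
  have int_w2: "integrable \<nu> (\<lambda>z. (w z)\<^sup>2)"
    unfolding w_def power2_eq_square by (rule integrable_second_moment_inner[OF second_moment])
  have int_w2Q: "integrable \<nu> (\<lambda>z. (w z)\<^sup>2 * Q t z)" for t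
    by (rule Bochner_Integration.integrable_bound[OF int_w2])
       (auto simp: Q_bounds abs_mult intro!: mult_left_le)
  have int_Q: "integrable \<nu> (Q t)" for t
    by (rule measure_pmf.integrable_const_bound[where B = 1]) (auto simp: Q_bounds)
  have q_eq: "pmf q t = (\<integral>z. w z * Q t z \<partial>\<nu>)" for t
    unfolding q_def w_def Q_def u_def v_def by (rule pmf_bind_low_rank_eq_integral[OF low_rank ok int])
  have r_eq: "pmf r t = (\<integral>z. Q t z \<partial>\<nu>)" for t
    unfolding r_def Q_def by (rule pmf_bind)
  have "(pmf q t)\<^sup>2 \<le> A t * pmf r t" for t
    unfolding q_eq r_eq A_def by (rule weighted_Cauchy_Schwarz_integral[OF Q_bounds(1) int_w2Q int_wQ int_Q])
  then have "(\<integral>\<^sup>+t. ennreal (pmf q t) / ennreal (pmf r t) \<partial>measure_pmf q)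
      \<le> (\<integral>\<^sup>+t. ennreal (A t) \<partial>count_space UNIV)"
    unfolding nn_integral_measure_pmf
    by (intro nn_integral_mono) (simp add: ennreal_mult_divide_le_of_square_le)
  also have "\<dots> = ennreal (\<integral>z. (w z)\<^sup>2 \<partial>\<nu>)"
    unfolding A_def Q_def by (rule nn_integral_count_space_integral_kernel[OF _ int_w2]) simp
  also have "(\<integral>z. (w z)\<^sup>2 \<partial>\<nu>) = v \<bullet> u"
    using integral_second_moment_inner[OF second_moment, of u u] ok
    by (simp add: feat_cov_def[symmetric] w_def power2_eq_square u_def matrix_vector_mul_assoc
        feat_cov_ok_def matrix_mult_matrix_inv)
  finally show ?thesis
    unfolding u_def .
qed

lemma nn_integral_ratio_uniform_actions_le:
  fixes S R :: "'x pmf" and \<pi> :: "'x \<Rightarrow> 'a::finite pmf"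
  defines "d \<equiv> bind_pmf S (\<lambda>x. map_pmf (Pair x) (\<pi> x))"
    and "\<mu> \<equiv> bind_pmf R (\<lambda>x. map_pmf (Pair x) (pmf_of_set UNIV))"
  shows "(\<integral>\<^sup>+z. ennreal (pmf d z) / ennreal (pmf \<mu> z) \<partial>d)
           \<le> of_nat CARD('a) * (\<integral>\<^sup>+x. ennreal (pmf S x) / ennreal (pmf R x) \<partial>S)"
proof -
  define N where "N = real CARD('a)"
  have "N > 0"
    by (simp add: N_def)
  have pointwise: "ennreal (pmf d (x, a)) / ennreal (pmf \<mu> (x, a))
      \<le> ennreal N * (ennreal (pmf S x) / ennreal (pmf R x))" for x a
  proof (cases "pmf R x = 0")
    case True
    then show ?thesis
      using \<open>N > 0\<close> by (cases "pmf S x = 0") (auto simp: d_def pmf_bind_map_Pair ennreal_mult_top)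
  next
    case False
    then have "pmf R x > 0"
      by (simp add: order_less_le)
    have "pmf S x * pmf (\<pi> x) a / (pmf R x * (1 / N)) \<le> N * (pmf S x / pmf R x)"
      using \<open>pmf R x > 0\<close> \<open>N > 0\<close> by (simp add: field_simps mult_left_le pmf_le_1)
    then show ?thesis
      using \<open>pmf R x > 0\<close> \<open>N > 0\<close>
      by (simp add: d_def \<mu>_def pmf_bind_map_Pair N_def divide_ennreal ennreal_mult'[symmetric]
          ennreal_leI del: times_divide_eq_right)
  qed
  have "(\<integral>\<^sup>+z. ennreal (pmf d z) / ennreal (pmf \<mu> z) \<partial>d)
      = (\<integral>\<^sup>+x. \<integral>\<^sup>+a. ennreal (pmf d (x, a)) / ennreal (pmf \<mu> (x, a)) \<partial>\<pi> x \<partial>S)"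
    by (simp add: d_def)
  also have "\<dots> \<le> (\<integral>\<^sup>+x. ennreal N * (ennreal (pmf S x) / ennreal (pmf R x)) \<partial>S)"
    by (intro nn_integral_mono order_trans[OF nn_integral_mono[OF pointwise]])
       (simp add: measure_pmf.emeasure_space_1)
  also have "\<dots> = of_nat CARD('a) * (\<integral>\<^sup>+x. ennreal (pmf S x) / ennreal (pmf R x) \<partial>S)"
    by (simp add: nn_integral_cmult N_def ennreal_of_nat_eq_real_of_nat)
  finally show ?thesis .
qed

lemma state_ratio_le_feat_norm:
  fixes \<rho> :: "'x::countable pmf" and \<pi> :: "('x, 'a) policy"
    and P :: "nat \<Rightarrow> 'x \<Rightarrow> 'a \<Rightarrow> 'x pmf" and \<phi> :: "nat \<Rightarrow> 'x \<Rightarrow> 'a \<Rightarrow> real^'d"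
  assumes low_rank: "\<And>x a x'. pmf (P k x a) x' = \<phi> k x a \<bullet> \<psi> x'"
    and "k \<ge> 1" and ok: "feat_cov_ok \<nu> (\<phi> k)"
  defines "S \<equiv> state_dist \<rho> P \<pi> (Suc k)"
  shows "(\<integral>\<^sup>+x. ennreal (pmf S x) / ennreal (pmf (bind_pmf \<nu> (case_prod (P k))) x) \<partial>S)
           \<le> feat_norm \<rho> P \<phi> k \<nu> \<pi>"
proof (cases "integrable (measure_pmf (occ \<rho> P \<pi> k)) (\<lambda>z. \<phi> k (fst z) (snd z))")
  case True
  then show ?thesis
    using low_rank_bind_ratio_le[OF low_rank ok True]
    by (simp add: S_def state_dist_Suc_eq_bind_occ[OF \<open>k \<ge> 1\<close>] feat_norm_def Let_def)
next
  case False
  then show ?thesis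
    by (simp add: feat_norm_def)
qed

lemma ennreal_le_mult_INF:
  fixes c x :: ennreal
  assumes c: "c \<noteq> 0" "c \<noteq> \<top>" and le: "\<And>i. i \<in> I \<Longrightarrow> x \<le> c * f i"
  shows "x \<le> c * (INF i\<in>I. f i)"
proof -
  have "x / c \<le> (INF i\<in>I. f i)"
  proof (rule INF_greatest)
    fix i assume "i \<in> I"
    then have "x / c \<le> (f i * c) / c"
      using le[of i] by (intro divide_right_mono_ennreal) (simp add: mult.commute)
    then show "x / c \<le> f i"
      using c by (simp add: mult_divide_eq_ennreal)
  qed
  then have "x / c * c \<le> (INF i\<in>I. f i) * c"
    by (rule mult_right_mono) simp
  moreover have "x / c * c = x"
    using c by (simp add: ennreal_divide_times top.not_eq_extremum)
  ultimately show ?thesis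
    by (simp add: mult.commute)
qed

lemma C1_le_card_mult_Cfeat:
  fixes P :: "nat \<Rightarrow> 'x::countable \<Rightarrow> 'a::finite \<Rightarrow> 'x pmf" and \<phi> :: "nat \<Rightarrow> 'x \<Rightarrow> 'a \<Rightarrow> real^'d"
  assumes low_rank: "\<And>x a x'. pmf (P k x a) x' = \<phi> k x a \<bullet> \<psi> x'" and "k \<ge> 1"
  shows "C1 \<rho> P Pols (Suc k) \<le> of_nat CARD('a) * Cfeat \<rho> P Pols \<phi> k"
  unfolding Cfeat_def
proof (rule ennreal_le_mult_INF)
  fix \<nu> assume "\<nu> \<in> {\<nu>. feat_cov_ok \<nu> (\<phi> k)}"
  then have ok: "feat_cov_ok \<nu> (\<phi> k)" by simp
  define \<mu> where "\<mu> = bind_pmf (bind_pmf \<nu> (case_prod (P k))) (\<lambda>x. map_pmf (Pair x) (pmf_of_set (UNIV :: 'a set)))"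
  have "C1 \<rho> P Pols (Suc k)
      \<le> (SUP \<pi>\<in>Pols. \<integral>\<^sup>+z. ennreal (pmf (occ \<rho> P \<pi> (Suc k)) z) / ennreal (pmf \<mu> z) \<partial>occ \<rho> P \<pi> (Suc k))"
    unfolding C1_def by (rule INF_lower) simp
  also have "\<dots> \<le> of_nat CARD('a) * (SUP \<pi>\<in>Pols. feat_norm \<rho> P \<phi> k \<nu> \<pi>)"
  proof (rule SUP_least)
    fix \<pi> assume "\<pi> \<in> Pols"
    have "(\<integral>\<^sup>+z. ennreal (pmf (occ \<rho> P \<pi> (Suc k)) z) / ennreal (pmf \<mu> z) \<partial>occ \<rho> P \<pi> (Suc k))
        \<le> of_nat CARD('a) * feat_norm \<rho> P \<phi> k \<nu> \<pi>"
      using nn_integral_ratio_uniform_actions_le[of "state_dist \<rho> P \<pi> (Suc k)" "\<pi> (Suc k)"]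
        state_ratio_le_feat_norm[where P = P and \<phi> = \<phi>, OF low_rank \<open>k \<ge> 1\<close> ok]
      unfolding occ_def \<mu>_def by (meson dual_order.trans mult_left_mono zero_le)
    also have "\<dots> \<le> of_nat CARD('a) * (SUP \<pi>\<in>Pols. feat_norm \<rho> P \<phi> k \<nu> \<pi>)"
      using \<open>\<pi> \<in> Pols\<close> by (intro mult_left_mono SUP_upper) auto
    finally show "(\<integral>\<^sup>+z. ennreal (pmf (occ \<rho> P \<pi> (Suc k)) z) / ennreal (pmf \<mu> z) \<partial>occ \<rho> P \<pi> (Suc k))
        \<le> of_nat CARD('a) * (SUP \<pi>\<in>Pols. feat_norm \<rho> P \<phi> k \<nu> \<pi>)" .
  qed
  finally show "C1 \<rho> P Pols (Suc k) \<le> of_nat CARD('a) * (SUP \<pi>\<in>Pols. feat_norm \<rho> P \<phi> k \<nu> \<pi>)" .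
qed simp_all

lemma ln_mixture_gain:
  fixes D a c \<eta> \<epsilon> :: real
  assumes "0 \<le> D" "0 \<le> a" "0 < c" "0 < \<eta>" "\<eta> \<le> 1/2" "\<eta> \<le> \<epsilon>"
  shows "ln (D + c) - 2 * \<eta> + \<eta> * a / (D + c + \<epsilon> * a) \<le> ln ((1 - \<eta>) * D + \<eta> * a + c)"
proof -
  define t where "t = \<eta> * a / (D + c)"
  have "D + c > 0" "t \<ge> 0"
    using assms by (simp_all add: t_def)
  have "\<eta> * \<eta> \<le> 1/2 * \<eta>"
    using assms by (intro mult_right_mono) auto
  then have "-2 * \<eta> \<le> ln (1 - \<eta>)"
    using ln_one_minus_pos_lower_bound[of \<eta>] assms unfolding power2_eq_square by linarith
  moreover have "\<eta> * a / (D + c + \<epsilon> * a) \<le> ln (1 + t)"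
  proof -
    have "0 < D + c + \<eta> * a" "\<eta> * a \<le> \<epsilon> * a"
      using assms \<open>D + c > 0\<close> by (auto intro: add_pos_nonneg mult_right_mono)
    then have "\<eta> * a / (D + c + \<epsilon> * a) \<le> \<eta> * a / (D + c + \<eta> * a)"
      using assms by (intro divide_left_mono mult_pos_pos) auto
    also have "\<dots> = t / (1 + t)"
    proof -
      have "1 + t = (D + c + \<eta> * a) / (D + c)"
        using \<open>D + c > 0\<close> by (simp add: t_def field_simps)
      then show ?thesis
        using \<open>D + c > 0\<close> \<open>0 < D + c + \<eta> * a\<close> by (simp add: t_def)
    qed
    also have "\<dots> \<le> ln (1 + t)"
      using ln_add1_ge[OF \<open>t \<ge> 0\<close>] by (simp add: add.commute)
    finally show ?thesis .
  qed
  moreover have "ln (1 - \<eta>) + ln (D + c) + ln (1 + t) \<le> ln ((1 - \<eta>) * D + \<eta> * a + c)"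
  proof -
    have "(1 - \<eta>) * (\<eta> * a) \<le> \<eta> * a" "(1 - \<eta>) * c \<le> c"
      using assms by (auto intro!: mult_left_le_one_le)
    have "(1 - \<eta>) * (D + c) * (1 + t) = (1 - \<eta>) * D + (1 - \<eta>) * (\<eta> * a) + (1 - \<eta>) * c"
      using \<open>D + c > 0\<close> by (simp add: t_def field_simps)
    also have "\<dots> \<le> (1 - \<eta>) * D + \<eta> * a + c"
      using \<open>(1 - \<eta>) * (\<eta> * a) \<le> \<eta> * a\<close> \<open>(1 - \<eta>) * c \<le> c\<close> by linarith
    finally have le: "(1 - \<eta>) * (D + c) * (1 + t) \<le> (1 - \<eta>) * D + \<eta> * a + c" .
    have pos: "0 < (1 - \<eta>) * (D + c) * (1 + t)"
      using assms \<open>D + c > 0\<close> \<open>t \<ge> 0\<close> by simp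
    have "ln (1 - \<eta>) + ln (D + c) + ln (1 + t) = ln ((1 - \<eta>) * (D + c) * (1 + t))"
      using assms \<open>D + c > 0\<close> \<open>t \<ge> 0\<close> by (simp add: ln_mult)
    also have "\<dots> \<le> ln ((1 - \<eta>) * D + \<eta> * a + c)"
      using le pos by (rule ln_mono)
    finally show ?thesis .
  qed
  ultimately show ?thesis
    by linarith
qed

lemma pmf_bind_bernoulli_mixture:
  assumes "0 \<le> \<eta>" "\<eta> \<le> 1"
  shows "pmf (bind_pmf (bind_pmf (bernoulli_pmf \<eta>) (\<lambda>b. if b then return_pmf \<pi> else p)) dd) z
           = (1 - \<eta>) * pmf (bind_pmf p dd) z + \<eta> * pmf (dd \<pi>) z"
  using assms by (simp add: bind_assoc_pmf bind_return_pmf if_distrib pmf_bind algebra_simps)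

lemma sum_ln_mixture_gain:
  fixes a D m :: "'z \<Rightarrow> real"
  assumes "\<And>z. z \<in> Z \<Longrightarrow> m z > 0" and "sum m Z \<le> 1"
    and "\<And>z. D z \<ge> 0" "\<And>z. a z \<ge> 0" "\<theta> > 0" "0 < \<eta>" "\<eta> \<le> 1/2" "\<eta> \<le> \<epsilon>"
  shows "(\<Sum>z\<in>Z. m z * ln (D z + \<theta> * m z)) - 2 * \<eta>
           + \<eta> * (\<Sum>z\<in>Z. m z * (a z / (D z + \<theta> * m z + \<epsilon> * a z)))
         \<le> (\<Sum>z\<in>Z. m z * ln ((1 - \<eta>) * D z + \<eta> * a z + \<theta> * m z))"
proof -
  have "(\<Sum>z\<in>Z. m z * ln (D z + \<theta> * m z)) - 2 * \<eta>
           + \<eta> * (\<Sum>z\<in>Z. m z * (a z / (D z + \<theta> * m z + \<epsilon> * a z)))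
      \<le> (\<Sum>z\<in>Z. m z * ln (D z + \<theta> * m z)) - 2 * \<eta> * sum m Z
           + \<eta> * (\<Sum>z\<in>Z. m z * (a z / (D z + \<theta> * m z + \<epsilon> * a z)))"
    using assms by simp
  also have "\<dots> = (\<Sum>z\<in>Z. m z * (ln (D z + \<theta> * m z) - 2 * \<eta>
                      + \<eta> * a z / (D z + \<theta> * m z + \<epsilon> * a z)))"
    by (simp add: algebra_simps sum.distrib sum_distrib_left sum_distrib_right sum_subtractf)
  also have "\<dots> \<le> (\<Sum>z\<in>Z. m z * ln ((1 - \<eta>) * D z + \<eta> * a z + \<theta> * m z))"
    using assms by (intro sum_mono mult_left_mono ln_mixture_gain) (auto intro: less_imp_le)
  finally show ?thesis .
qed

lemma sum_mult_ln_le: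
  fixes D m :: "'z \<Rightarrow> real"
  assumes m_pos: "\<And>z. z \<in> Z \<Longrightarrow> m z > 0" and "\<And>z. 0 \<le> D z" "\<And>z. D z \<le> 1" "\<theta> > 0"
  shows "(\<Sum>z\<in>Z. m z * ln (D z + \<theta> * m z)) \<le> (\<Sum>z\<in>Z. m z * (1 + \<theta> * m z))"
proof (intro sum_mono mult_left_mono)
  fix z assume "z \<in> Z"
  then have "0 < D z + \<theta> * m z"
    using assms by (simp add: add_nonneg_pos)
  then have "ln (D z + \<theta> * m z) \<le> D z + \<theta> * m z"
    by (rule ln_bound)
  then show "ln (D z + \<theta> * m z) \<le> 1 + \<theta> * m z"
    using assms(3)[of z] by linarith
  show "0 \<le> m z"
    using m_pos[OF \<open>z \<in> Z\<close>] by simp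
qed

lemma exists_mixture_smoothed_coverage_le_3:
  fixes dd :: "'p \<Rightarrow> 'z pmf" and m :: "'z \<Rightarrow> real"
  assumes "Pols \<noteq> {}" "finite Z" and m_pos: "\<And>z. z \<in> Z \<Longrightarrow> m z > 0" and "sum m Z \<le> 1"
    and "\<theta> > 0" "\<epsilon> > 0"
  shows "\<exists>p. set_pmf p \<subseteq> Pols \<and> (\<forall>\<pi>\<in>Pols.
           (\<Sum>z\<in>Z. m z * (pmf (dd \<pi>) z / (pmf (bind_pmf p dd) z + \<theta> * m z + \<epsilon> * pmf (dd \<pi>) z))) \<le> 3)"
proof -
  define g where "g p \<pi> = (\<Sum>z\<in>Z. m z * (pmf (dd \<pi>) z / (pmf (bind_pmf p dd) z + \<theta> * m z + \<epsilon> * pmf (dd \<pi>) z)))"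
    for p \<pi>
  define \<Phi> where "\<Phi> p = (\<Sum>z\<in>Z. m z * ln (pmf (bind_pmf p dd) z + \<theta> * m z))" for p
  define PS where "PS = {p. set_pmf p \<subseteq> Pols}"
  define \<eta> :: real where "\<eta> = min \<epsilon> (1/2)"
  have \<eta>: "0 < \<eta>" "\<eta> \<le> 1/2" "\<eta> \<le> \<epsilon>"
    using assms by (auto simp: \<eta>_def)
  have step: "\<exists>p'\<in>PS. \<Phi> p - 2 * \<eta> + \<eta> * g p \<pi> \<le> \<Phi> p'" if "p \<in> PS" "\<pi> \<in> Pols" for p \<pi>
  proof
    define p' where "p' = bind_pmf (bernoulli_pmf \<eta>) (\<lambda>b. if b then return_pmf \<pi> else p)"
    show "p' \<in> PS"
      using that \<eta> by (auto simp: p'_def PS_def split: if_splits)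
    have mix: "pmf (bind_pmf p' dd) z = (1 - \<eta>) * pmf (bind_pmf p dd) z + \<eta> * pmf (dd \<pi>) z" for z
      unfolding p'_def using \<eta> by (intro pmf_bind_bernoulli_mixture) auto
    show "\<Phi> p - 2 * \<eta> + \<eta> * g p \<pi> \<le> \<Phi> p'"
      unfolding \<Phi>_def g_def mix
      by (rule sum_ln_mixture_gain[OF m_pos \<open>sum m Z \<le> 1\<close>]) (use \<open>\<theta> > 0\<close> \<eta> in auto)
  qed
  have "\<Phi> p \<le> (\<Sum>z\<in>Z. m z * (1 + \<theta> * m z))" for p
    unfolding \<Phi>_def using m_pos \<open>\<theta> > 0\<close> by (intro sum_mult_ln_le) (auto simp: pmf_le_1)
  then have bdd: "bdd_above (\<Phi> ` PS)"
    by (intro bdd_aboveI) blast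
  obtain \<pi>0 where "\<pi>0 \<in> Pols"
    using assms(1) by blast
  then have "return_pmf \<pi>0 \<in> PS"
    by (simp add: PS_def)
  then obtain p where p: "p \<in> PS" "Sup (\<Phi> ` PS) - \<eta> < \<Phi> p"
    using less_cSup_iff[OF _ bdd, of "Sup (\<Phi> ` PS) - \<eta>"] \<eta> by force
  have "g p \<pi> \<le> 3" if \<pi>: "\<pi> \<in> Pols" for \<pi>
  proof -
    obtain p' where "p' \<in> PS" "\<Phi> p - 2 * \<eta> + \<eta> * g p \<pi> \<le> \<Phi> p'"
      using step[OF p(1) \<pi>] by blast
    moreover have "\<Phi> p' \<le> Sup (\<Phi> ` PS)"
      using \<open>p' \<in> PS\<close> bdd by (intro cSup_upper) auto
    ultimately have "\<eta> * g p \<pi> \<le> \<eta> * 3"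
      using p(2) by linarith
    then show ?thesis
      using \<eta>(1) by simp
  qed
  then show ?thesis
    using p(1) unfolding PS_def g_def by blast
qed

lemma ratio_le_smoothed_ratio_add:
  fixes a D c \<epsilon> :: real
  assumes "0 \<le> a" "0 \<le> D" "0 \<le> c" "0 < \<epsilon>"
  shows "a * (a / (D + \<epsilon> * a)) \<le> a * (a / (D + c + \<epsilon> * a)) + c / \<epsilon>\<^sup>2"
proof (cases "a = 0")
  case False
  with assms have "a > 0" "D + c + \<epsilon> * a > 0" "D + \<epsilon> * a > 0"
    by (simp_all add: add_nonneg_pos)
  have "a * (a / (D + \<epsilon> * a)) - a * (a / (D + c + \<epsilon> * a))
      = a * a * c / ((D + \<epsilon> * a) * (D + c + \<epsilon> * a))"
    using \<open>D + c + \<epsilon> * a > 0\<close> \<open>D + \<epsilon> * a > 0\<close> by (simp add: field_simps)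
  also have "\<dots> \<le> a * a * c / ((\<epsilon> * a) * (\<epsilon> * a))"
    using assms \<open>a > 0\<close> \<open>D + c + \<epsilon> * a > 0\<close> \<open>D + \<epsilon> * a > 0\<close>
    by (intro divide_left_mono mult_mono mult_pos_pos) auto
  also have "\<dots> = c / \<epsilon>\<^sup>2"
    using \<open>a > 0\<close> assms by (simp add: field_simps power2_eq_square)
  finally show ?thesis
    by simp
qed (use assms in simp)

lemma mult_le_AM_GM_of_le_inverse:
  fixes a y m \<epsilon> \<kappa> :: real
  assumes "0 \<le> y" "y \<le> 1 / \<epsilon>" "0 < m" "0 < \<epsilon>" "0 < \<kappa>"
  shows "a * y \<le> \<kappa> / 2 * (a * (a / m)) + m * y / (2 * \<kappa> * \<epsilon>)"
proof -
  have "0 \<le> (\<kappa> * a - m * y)\<^sup>2 / (2 * \<kappa> * m)"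
    using assms by simp
  also have "\<dots> = \<kappa> / 2 * (a * (a / m)) + m * y\<^sup>2 / (2 * \<kappa>) - a * y"
    using assms by (simp add: field_simps power2_eq_square)
  finally have "a * y \<le> \<kappa> / 2 * (a * (a / m)) + m * y\<^sup>2 / (2 * \<kappa>)"
    by simp
  moreover have "y\<^sup>2 \<le> y * (1 / \<epsilon>)"
    unfolding power2_eq_square using assms(2,1) by (rule mult_left_mono)
  then have "m * y\<^sup>2 / (2 * \<kappa>) \<le> m * y / (2 * \<kappa> * \<epsilon>)"
    using assms by (simp add: field_simps mult_left_mono)
  ultimately show ?thesis
    by linarith
qed

lemma smoothed_ratio_le_AM_GM:
  fixes a D m \<theta> \<epsilon> \<kappa> :: real
  assumes "0 \<le> a" "0 \<le> D" "0 < m" "0 < \<theta>" "0 < \<epsilon>" "0 < \<kappa>"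
  shows "a * (a / (D + \<epsilon> * a))
           \<le> \<kappa> / 2 * (a * (a / m)) + m * (a / (D + \<theta> * m + \<epsilon> * a)) / (2 * \<kappa> * \<epsilon>) + \<theta> * m / \<epsilon>\<^sup>2"
proof -
  define y where "y = a / (D + \<theta> * m + \<epsilon> * a)"
  have "0 \<le> y" "y \<le> 1 / \<epsilon>"
  proof -
    show "0 \<le> y"
      using assms by (simp add: y_def)
    have "0 < D + \<theta> * m + \<epsilon> * a"
      using assms by (intro add_pos_nonneg add_nonneg_pos mult_pos_pos) auto
    then show "y \<le> 1 / \<epsilon>"
      unfolding y_def using assms by (simp add: divide_simps)
  qed
  have "a * (a / (D + \<epsilon> * a)) \<le> a * y + \<theta> * m / \<epsilon>\<^sup>2"
    unfolding y_def using assms by (intro ratio_le_smoothed_ratio_add) auto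
  also have "\<dots> \<le> \<kappa> / 2 * (a * (a / m)) + m * y / (2 * \<kappa> * \<epsilon>) + \<theta> * m / \<epsilon>\<^sup>2"
    using mult_le_AM_GM_of_le_inverse[OF \<open>0 \<le> y\<close> \<open>y \<le> 1 / \<epsilon>\<close>] assms by simp
  finally show ?thesis
    unfolding y_def .
qed

lemma ratio_le_AM_GM_ennreal:
  fixes a D m \<epsilon> \<kappa> :: real
  assumes "0 \<le> a" "0 \<le> D" "0 \<le> m" "0 < \<epsilon>" "0 < \<kappa>"
  shows "ennreal (a * (a / (D + \<epsilon> * a)))
           \<le> ennreal (\<kappa> / (2 * \<epsilon>)) * (ennreal a * (ennreal a / ennreal m)) + ennreal (1 / (2 * \<kappa> * \<epsilon>)) * ennreal m"
proof (cases "a = 0 \<or> m = 0")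
  case True
  show ?thesis
  proof (cases "a = 0")
    case False
    with True assms have "ennreal a * (ennreal a / ennreal m) = \<top>"
      by (simp add: divide_ennreal_def ennreal_mult_top)
    with assms show ?thesis
      by (simp add: ennreal_mult_top)
  qed simp
next
  case False
  with assms have "a > 0" "m > 0"
    by auto
  have "a * (a / (D + \<epsilon> * a)) \<le> a * (a / (\<epsilon> * a))"
    using assms \<open>a > 0\<close> by (intro mult_left_mono divide_left_mono mult_pos_pos) (auto simp: add_nonneg_pos)
  also have "\<dots> = a / \<epsilon>"
    using \<open>a > 0\<close> by simp
  also have "\<dots> \<le> \<kappa> / (2 * \<epsilon>) * (a * (a / m)) + 1 / (2 * \<kappa> * \<epsilon>) * m"
  proof -
    have "0 \<le> (\<kappa> * a - m)\<^sup>2 / (2 * \<kappa> * m * \<epsilon>)"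
      using assms by simp
    also have "\<dots> = \<kappa> / (2 * \<epsilon>) * (a * (a / m)) + 1 / (2 * \<kappa> * \<epsilon>) * m - a / \<epsilon>"
      using assms \<open>m > 0\<close> by (simp add: field_simps power2_eq_square)
    finally show ?thesis
      by simp
  qed
  finally show ?thesis
    using assms \<open>a > 0\<close> \<open>m > 0\<close>
    by (simp add: divide_ennreal ennreal_leI ennreal_mult'[symmetric] ennreal_plus[symmetric]
        del: ennreal_plus times_divide_eq_right)
qed

lemma finite_subset_pmf_compl_le:
  fixes \<mu> :: "'z pmf"
  assumes "\<tau> > 0"
  shows "\<exists>Z. finite Z \<and> Z \<subseteq> set_pmf \<mu> \<and> measure_pmf.prob \<mu> (- Z) \<le> \<tau>"
proof -
  define F where "F n = from_nat_into (set_pmf \<mu>) ` {..<n}" for n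
  have "incseq F"
    unfolding F_def incseq_def by auto
  moreover have "(\<Union>n. F n) = set_pmf \<mu>"
    using range_from_nat_into[OF set_pmf_not_empty[of \<mu>] countable_set_pmf] unfolding F_def by auto
  ultimately have "(\<lambda>n. measure_pmf.prob \<mu> (F n)) \<longlonglongrightarrow> measure_pmf.prob \<mu> (set_pmf \<mu>)"
    by (metis measure_pmf.finite_Lim_measure_incseq sets_measure_pmf UNIV_I subsetI)
  then have "(\<lambda>n. measure_pmf.prob \<mu> (F n)) \<longlonglongrightarrow> 1"
    using measure_Int_set_pmf[of \<mu> UNIV] by (simp add: measure_pmf.prob_space)
  then obtain n where n: "1 - \<tau> < measure_pmf.prob \<mu> (F n)"
    using order_tendstoD(1)[of _ 1 sequentially "1 - \<tau>"] assms eventually_sequentially by force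
  have "measure_pmf.prob \<mu> (- F n) = 1 - measure_pmf.prob \<mu> (F n)"
    using measure_pmf.prob_compl[of "F n" \<mu>] by (simp add: Compl_eq_Diff_UNIV)
  moreover have "F n \<subseteq> set_pmf \<mu>"
    using from_nat_into[OF set_pmf_not_empty[of \<mu>]] unfolding F_def by auto
  ultimately show ?thesis
    using n by (intro exI[of _ "F n"]) (auto simp: F_def)
qed

lemma sum_ratio_le_of_smoothed_coverage:
  fixes a D m :: "'z \<Rightarrow> real"
  assumes "finite Z" and "\<And>z. z \<in> Z \<Longrightarrow> m z > 0" and "sum m Z \<le> 1"
    and "\<And>z. a z \<ge> 0" and "\<And>z. D z \<ge> 0" and "C > 0" "\<epsilon> > 0"
    and "(\<Sum>z\<in>Z. a z * (a z / m z)) \<le> C"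
    and "(\<Sum>z\<in>Z. m z * (a z / (D z + \<epsilon>\<^sup>2 / 3 * m z + \<epsilon> * a z))) \<le> 3"
  shows "(\<Sum>z\<in>Z. a z * (a z / (D z + \<epsilon> * a z))) \<le> sqrt (3 * C / \<epsilon>) + 1/3"
proof -
  define s where "s = sqrt (3 * C / \<epsilon>)"
  have "s > 0" "s * s = 3 * C / \<epsilon>"
    using assms by (simp_all add: s_def)
  define \<kappa> where "\<kappa> = s / C"
  have "\<kappa> > 0"
    using \<open>s > 0\<close> \<open>C > 0\<close> by (simp add: \<kappa>_def)
  have "(\<Sum>z\<in>Z. a z * (a z / (D z + \<epsilon> * a z)))
      \<le> (\<Sum>z\<in>Z. \<kappa> / 2 * (a z * (a z / m z))
            + m z * (a z / (D z + \<epsilon>\<^sup>2 / 3 * m z + \<epsilon> * a z)) / (2 * \<kappa> * \<epsilon>) + \<epsilon>\<^sup>2 / 3 * m z / \<epsilon>\<^sup>2)"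
    using assms \<open>\<kappa> > 0\<close> by (intro sum_mono smoothed_ratio_le_AM_GM) auto
  also have "\<dots> = \<kappa> / 2 * (\<Sum>z\<in>Z. a z * (a z / m z))
      + (\<Sum>z\<in>Z. m z * (a z / (D z + \<epsilon>\<^sup>2 / 3 * m z + \<epsilon> * a z))) / (2 * \<kappa> * \<epsilon>) + sum m Z / 3"
    using \<open>\<epsilon> > 0\<close> by (simp add: sum.distrib sum_distrib_left sum_divide_distrib)
  also have "\<dots> \<le> \<kappa> / 2 * C + 3 / (2 * \<kappa> * \<epsilon>) + 1 / 3"
    using assms \<open>\<kappa> > 0\<close> by (intro add_mono mult_left_mono divide_right_mono) auto
  also have "\<dots> = s + 1/3"
    using \<open>s * s = 3 * C / \<epsilon>\<close> \<open>s > 0\<close> assms by (simp add: \<kappa>_def field_simps)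
  finally show ?thesis
    unfolding s_def .
qed

lemma nn_integral_ratio_indicator_le:
  fixes a D m :: "'z \<Rightarrow> real"
  assumes a_nonneg: "\<And>z. a z \<ge> 0" and D_nonneg: "\<And>z. D z \<ge> 0" and m_nonneg: "\<And>z. m z \<ge> 0"
    and "C > 0" "\<epsilon> > 0"
    and chi: "(\<integral>\<^sup>+z. ennreal (a z) * (ennreal (a z) / ennreal (m z)) \<partial>count_space UNIV) \<le> ennreal C"
    and tail: "(\<integral>\<^sup>+z. ennreal (m z) * indicator A z \<partial>count_space UNIV) \<le> ennreal (\<epsilon>\<^sup>2 / (9 * C))"
  shows "(\<integral>\<^sup>+z. ennreal (a z * (a z / (D z + \<epsilon> * a z))) * indicator A z \<partial>count_space UNIV)
           \<le> ennreal (1/3)"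
proof -
  define \<kappa> where "\<kappa> = \<epsilon> / (3 * C)"
  have "\<kappa> > 0"
    using assms by (simp add: \<kappa>_def)
  have "(\<integral>\<^sup>+z. ennreal (a z * (a z / (D z + \<epsilon> * a z))) * indicator A z \<partial>count_space UNIV)
      \<le> (\<integral>\<^sup>+z. ennreal (\<kappa> / (2 * \<epsilon>)) * (ennreal (a z) * (ennreal (a z) / ennreal (m z)))
            + ennreal (1 / (2 * \<kappa> * \<epsilon>)) * (ennreal (m z) * indicator A z) \<partial>count_space UNIV)"
    using ratio_le_AM_GM_ennreal[OF a_nonneg D_nonneg m_nonneg \<open>\<epsilon> > 0\<close> \<open>\<kappa> > 0\<close>]
    by (intro nn_integral_mono) (simp split: split_indicator)
  also have "\<dots> = ennreal (\<kappa> / (2 * \<epsilon>)) * (\<integral>\<^sup>+z. ennreal (a z) * (ennreal (a z) / ennreal (m z)) \<partial>count_space UNIV)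
      + ennreal (1 / (2 * \<kappa> * \<epsilon>)) * (\<integral>\<^sup>+z. ennreal (m z) * indicator A z \<partial>count_space UNIV)"
    by (simp add: nn_integral_add nn_integral_cmult)
  also have "\<dots> \<le> ennreal (\<kappa> / (2 * \<epsilon>)) * ennreal C + ennreal (1 / (2 * \<kappa> * \<epsilon>)) * ennreal (\<epsilon>\<^sup>2 / (9 * C))"
    using chi tail by (intro add_mono mult_left_mono) auto
  also have "\<dots> = ennreal (\<kappa> / (2 * \<epsilon>) * C + 1 / (2 * \<kappa> * \<epsilon>) * (\<epsilon>\<^sup>2 / (9 * C)))"
    using assms \<open>\<kappa> > 0\<close>
    by (simp add: ennreal_mult[symmetric] ennreal_plus[symmetric] del: ennreal_plus)
  also have "\<kappa> / (2 * \<epsilon>) * C + 1 / (2 * \<kappa> * \<epsilon>) * (\<epsilon>\<^sup>2 / (9 * C)) = 1/3"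
    using assms by (simp add: \<kappa>_def field_simps power2_eq_square)
  finally show ?thesis .
qed

lemma nn_integral_count_space_split_finite:
  fixes f :: "'z \<Rightarrow> ennreal"
  assumes "finite Z"
  shows "(\<integral>\<^sup>+z. f z \<partial>count_space UNIV) = (\<Sum>z\<in>Z. f z) + (\<integral>\<^sup>+z. f z * indicator (- Z) z \<partial>count_space UNIV)"
proof -
  have "(\<integral>\<^sup>+z. f z \<partial>count_space UNIV)
      = (\<integral>\<^sup>+z. f z * indicator Z z + f z * indicator (- Z) z \<partial>count_space UNIV)"
    by (intro nn_integral_cong) (simp split: split_indicator)
  also have "\<dots> = (\<integral>\<^sup>+z. f z * indicator Z z \<partial>count_space UNIV) + (\<integral>\<^sup>+z. f z * indicator (- Z) z \<partial>count_space UNIV)"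
    by (rule nn_integral_add) auto
  also have "(\<integral>\<^sup>+z. f z * indicator Z z \<partial>count_space UNIV) = (\<Sum>z\<in>Z. f z)"
    using nn_integral_count_space_indicator[of Z f] nn_integral_count_space_finite[OF assms, of f]
    by simp
  finally show ?thesis .
qed

lemma sum_ratio_le_nn_integral_ratio:
  fixes q \<mu> :: "'z pmf"
  assumes "finite Z" "Z \<subseteq> set_pmf \<mu>"
  shows "ennreal (\<Sum>z\<in>Z. pmf q z * (pmf q z / pmf \<mu> z))
           \<le> (\<integral>\<^sup>+z. ennreal (pmf q z) / ennreal (pmf \<mu> z) \<partial>q)"
proof -
  define F where "F z = ennreal (pmf q z) * (ennreal (pmf q z) / ennreal (pmf \<mu> z))" for z
  have "\<And>z. z \<in> Z \<Longrightarrow> pmf \<mu> z > 0"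
    using assms by (auto simp: pmf_positive)
  then have "ennreal (\<Sum>z\<in>Z. pmf q z * (pmf q z / pmf \<mu> z)) = (\<Sum>z\<in>Z. F z)"
    by (simp add: F_def divide_ennreal ennreal_mult'[symmetric] del: times_divide_eq_right)
  also have "\<dots> \<le> (\<integral>\<^sup>+z. F z \<partial>count_space UNIV)"
    unfolding nn_integral_count_space_split_finite[OF \<open>finite Z\<close>, of F] by simp
  finally show ?thesis
    by (simp add: F_def nn_integral_measure_pmf)
qed

lemma nn_integral_coverage_le_of_smoothed_coverage:
  fixes q r \<mu> :: "'z pmf"
  assumes "finite Z" "Z \<subseteq> set_pmf \<mu>" and tail: "measure_pmf.prob \<mu> (- Z) \<le> \<epsilon>\<^sup>2 / (9 * C)"
    and "C > 0" "\<epsilon> > 0"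
    and chi: "(\<integral>\<^sup>+z. ennreal (pmf q z) / ennreal (pmf \<mu> z) \<partial>q) \<le> ennreal C"
    and "(\<Sum>z\<in>Z. pmf \<mu> z * (pmf q z / (pmf r z + \<epsilon>\<^sup>2 / 3 * pmf \<mu> z + \<epsilon> * pmf q z))) \<le> 3"
  shows "(\<integral>\<^sup>+z. ennreal (pmf q z / (pmf r z + \<epsilon> * pmf q z)) \<partial>q) \<le> ennreal (sqrt (3 * C / \<epsilon>) + 2/3)"
proof -
  define G where "G z = ennreal (pmf q z * (pmf q z / (pmf r z + \<epsilon> * pmf q z)))" for z
  have "sum (pmf \<mu>) Z \<le> 1"
    using measure_measure_pmf_finite[OF \<open>finite Z\<close>, of \<mu>] measure_pmf.prob_le_1[of \<mu> Z] by simp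
  have "ennreal (\<Sum>z\<in>Z. pmf q z * (pmf q z / pmf \<mu> z)) \<le> ennreal C"
    using sum_ratio_le_nn_integral_ratio[OF \<open>finite Z\<close> \<open>Z \<subseteq> set_pmf \<mu>\<close>] chi by (rule order_trans)
  then have "(\<Sum>z\<in>Z. pmf q z * (pmf q z / (pmf r z + \<epsilon> * pmf q z))) \<le> sqrt (3 * C / \<epsilon>) + 1/3"
    using assms \<open>sum (pmf \<mu>) Z \<le> 1\<close>
    by (intro sum_ratio_le_of_smoothed_coverage) (auto simp: pmf_positive simp del: times_divide_eq_right)
  then have "(\<Sum>z\<in>Z. G z) \<le> ennreal (sqrt (3 * C / \<epsilon>) + 1/3)"
    using \<open>\<epsilon> > 0\<close> by (simp add: G_def ennreal_leI del: ennreal_plus)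
  moreover have "(\<integral>\<^sup>+z. G z * indicator (- Z) z \<partial>count_space UNIV) \<le> ennreal (1/3)"
  proof (rule nn_integral_ratio_indicator_le[of "pmf q" "pmf r" "pmf \<mu>" C \<epsilon>, folded G_def])
    show "(\<integral>\<^sup>+z. ennreal (pmf q z) * (ennreal (pmf q z) / ennreal (pmf \<mu> z)) \<partial>count_space UNIV)
        \<le> ennreal C"
      using chi by (simp add: nn_integral_measure_pmf)
    have "(\<integral>\<^sup>+z. ennreal (pmf \<mu> z) * indicator (- Z) z \<partial>count_space UNIV) = emeasure \<mu> (- Z)"
      by (simp add: nn_integral_pmf nn_integral_count_space_indicator[symmetric])
    also have "\<dots> \<le> ennreal (\<epsilon>\<^sup>2 / (9 * C))"
      using tail by (simp add: measure_pmf.emeasure_eq_measure ennreal_leI)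
    finally show "(\<integral>\<^sup>+z. ennreal (pmf \<mu> z) * indicator (- Z) z \<partial>count_space UNIV) \<le> ennreal (\<epsilon>\<^sup>2 / (9 * C))" .
  qed (use assms in auto)
  ultimately have "(\<integral>\<^sup>+z. G z \<partial>count_space UNIV) \<le> ennreal (sqrt (3 * C / \<epsilon>) + 1/3) + ennreal (1/3)"
    unfolding nn_integral_count_space_split_finite[OF \<open>finite Z\<close>, of G] by (rule add_mono)
  also have "\<dots> = ennreal (sqrt (3 * C / \<epsilon>) + 1/3 + 1/3)"
    using assms by (intro ennreal_plus[symmetric]) auto
  also have "\<dots> = ennreal (sqrt (3 * C / \<epsilon>) + 2/3)"
    by (rule arg_cong[where f = ennreal]) simp
  finally show ?thesis
    by (simp add: G_def nn_integral_measure_pmf ennreal_mult'[symmetric])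
qed

lemma exists_mixture_coverage_le:
  fixes dd :: "'p \<Rightarrow> 'z pmf" and \<mu> :: "'z pmf"
  assumes "Pols \<noteq> {}" "\<epsilon> > 0" "C > 0"
    and C1: "\<And>\<pi>. \<pi> \<in> Pols \<Longrightarrow> (\<integral>\<^sup>+z. ennreal (pmf (dd \<pi>) z) / ennreal (pmf \<mu> z) \<partial>dd \<pi>) \<le> ennreal C"
  shows "\<exists>p. set_pmf p \<subseteq> Pols \<and> (\<forall>\<pi>\<in>Pols.
           (\<integral>\<^sup>+z. ennreal (pmf (dd \<pi>) z / (pmf (bind_pmf p dd) z + \<epsilon> * pmf (dd \<pi>) z)) \<partial>dd \<pi>)
             \<le> ennreal (sqrt (3 * C / \<epsilon>) + 2/3))"
proof -
  \<comment> \<open>the smoothing weight \<epsilon>^2/3 and the tail mass \<epsilon>^2/(9 C) each cost 1/3 in the final bound\<close>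
  obtain Z where Z: "finite Z" "Z \<subseteq> set_pmf \<mu>" "measure_pmf.prob \<mu> (- Z) \<le> \<epsilon>\<^sup>2 / (9 * C)"
    using finite_subset_pmf_compl_le[of "\<epsilon>\<^sup>2 / (9 * C)" \<mu>] assms by auto
  have "sum (pmf \<mu>) Z \<le> 1"
    using measure_measure_pmf_finite[OF \<open>finite Z\<close>, of \<mu>] measure_pmf.prob_le_1[of \<mu> Z] by simp
  moreover have "\<And>z. z \<in> Z \<Longrightarrow> pmf \<mu> z > 0"
    using Z by (auto simp: pmf_positive)
  ultimately obtain p where "set_pmf p \<subseteq> Pols" and smoothed: "\<forall>\<pi>\<in>Pols.
      (\<Sum>z\<in>Z. pmf \<mu> z * (pmf (dd \<pi>) z / (pmf (bind_pmf p dd) z + \<epsilon>\<^sup>2 / 3 * pmf \<mu> z + \<epsilon> * pmf (dd \<pi>) z))) \<le> 3"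
    using exists_mixture_smoothed_coverage_le_3[where \<theta> = "\<epsilon>\<^sup>2 / 3" and \<epsilon> = \<epsilon> and dd = dd and m = "pmf \<mu>",
        OF \<open>Pols \<noteq> {}\<close> \<open>finite Z\<close>] \<open>\<epsilon> > 0\<close>
    by auto
  moreover have "(\<integral>\<^sup>+z. ennreal (pmf (dd \<pi>) z / (pmf (bind_pmf p dd) z + \<epsilon> * pmf (dd \<pi>) z)) \<partial>dd \<pi>)
      \<le> ennreal (sqrt (3 * C / \<epsilon>) + 2/3)" if "\<pi> \<in> Pols" for \<pi>
    using Z assms C1[OF that] smoothed that by (intro nn_integral_coverage_le_of_smoothed_coverage) auto
  ultimately show ?thesis
    by blast
qed

lemma sqrt_three_mult_add_ninth_le:
  fixes X :: real
  assumes "X \<ge> 0"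
  shows "sqrt (3 * X + 1/9) + 2/3 \<le> 1 + 2 * sqrt X"
proof -
  have "(2 * sqrt X + 1/3)\<^sup>2 = 4 * (sqrt X * sqrt X) + 4/3 * sqrt X + 1/9"
    by (simp add: power2_eq_square algebra_simps)
  then have "3 * X + 1/9 \<le> (2 * sqrt X + 1/3)\<^sup>2"
    using assms by simp
  then have "sqrt (3 * X + 1/9) \<le> 2 * sqrt X + 1/3"
    using assms by (simp add: real_le_lsqrt)
  then show ?thesis
    by simp
qed

lemma Cov_le_of_C1_le:
  fixes \<rho> :: "'x pmf" and P :: "nat \<Rightarrow> 'x \<Rightarrow> 'a \<Rightarrow> 'x pmf" and Pols :: "('x, 'a) policy set"
  assumes "Pols \<noteq> {}" "\<epsilon> > 0" "C0 \<ge> 0" and C1: "C1 \<rho> P Pols h \<le> ennreal C0"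
  shows "Cov \<rho> P Pols h \<epsilon> \<le> ennreal (1 + 2 * sqrt (C0 / \<epsilon>))"
proof -
  \<comment> \<open>the infimum C1 need not be attained; the slack \<epsilon>/27 is absorbed by sqrt_three_mult_add_ninth_le\<close>
  define C where "C = C0 + \<epsilon> / 27"
  have "C > 0"
    using assms by (simp add: C_def add_nonneg_pos)
  have "ennreal C0 < ennreal C"
    using assms \<open>C > 0\<close> by (intro ennreal_lessI) (auto simp: C_def)
  with C1 have "C1 \<rho> P Pols h < ennreal C"
    by (rule le_less_trans)
  then obtain \<mu> where "(SUP \<pi>\<in>Pols. \<integral>\<^sup>+z. ennreal (pmf (occ \<rho> P \<pi> h) z) / ennreal (pmf \<mu> z) \<partial>occ \<rho> P \<pi> h)
      < ennreal C"
    unfolding C1_def INF_less_iff by blast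
  then have "(\<integral>\<^sup>+z. ennreal (pmf (occ \<rho> P \<pi> h) z) / ennreal (pmf \<mu> z) \<partial>occ \<rho> P \<pi> h) \<le> ennreal C"
    if "\<pi> \<in> Pols" for \<pi>
    by (rule order_trans[OF SUP_upper[OF that] less_imp_le])
  then obtain p where "set_pmf p \<subseteq> Pols" and p: "\<forall>\<pi>\<in>Pols.
      (\<integral>\<^sup>+z. ennreal (pmf (occ \<rho> P \<pi> h) z / (pmf (occ_mix \<rho> P p h) z + \<epsilon> * pmf (occ \<rho> P \<pi> h) z)) \<partial>occ \<rho> P \<pi> h)
        \<le> ennreal (sqrt (3 * C / \<epsilon>) + 2/3)"
    using exists_mixture_coverage_le[OF \<open>Pols \<noteq> {}\<close> \<open>\<epsilon> > 0\<close> \<open>C > 0\<close>, of "\<lambda>\<pi>. occ \<rho> P \<pi> h" \<mu>]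
    unfolding occ_mix_def by blast
  have "Cov \<rho> P Pols h \<epsilon> \<le> Psi \<rho> P Pols h \<epsilon> p"
    unfolding Cov_def using \<open>set_pmf p \<subseteq> Pols\<close> by (intro INF_lower) simp
  also have "\<dots> \<le> ennreal (sqrt (3 * C / \<epsilon>) + 2/3)"
    unfolding Psi_def using p by (intro SUP_least) auto
  also have "\<dots> \<le> ennreal (1 + 2 * sqrt (C0 / \<epsilon>))"
  proof (rule ennreal_leI)
    have "3 * C / \<epsilon> = 3 * (C0 / \<epsilon>) + 1/9"
      using assms by (simp add: C_def field_simps)
    then show "sqrt (3 * C / \<epsilon>) + 2/3 \<le> 1 + 2 * sqrt (C0 / \<epsilon>)"
      using sqrt_three_mult_add_ninth_le[of "C0 / \<epsilon>"] assms by simp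
  qed
  finally show ?thesis .
qed

theorem proposition7p2:
  fixes \<rho> :: "'x::countable pmf"
    and P :: "nat \<Rightarrow> 'x \<Rightarrow> 'a::finite \<Rightarrow> 'x pmf"
    and H :: nat
    and \<phi> :: "nat \<Rightarrow> 'x \<Rightarrow> 'a \<Rightarrow> real^'d"
    and \<psi> :: "nat \<Rightarrow> 'x \<Rightarrow> real^'d"
    and Pols :: "('x,'a) policy set"
  assumes low_rank: "\<And>h x a x'. 1 \<le> h \<Longrightarrow> h < H \<Longrightarrow> pmf (P h x a) x' = \<phi> h x a \<bullet> \<psi> (Suc h) x'"
    and nonempty: "Pols \<noteq> {}"
  shows "\<forall>h\<in>{2..H}.
           C1 \<rho> P Pols h \<le> of_nat (card (UNIV :: 'a set)) * Cfeat \<rho> P Pols \<phi> (h - 1)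
         \<and> (\<forall>\<epsilon>>0. Cfeat \<rho> P Pols \<phi> (h - 1) \<noteq> \<top> \<longrightarrow>
              Cov \<rho> P Pols h \<epsilon> \<le> ennreal (1 + 2 * sqrt (real (card (UNIV :: 'a set))
                                        * enn2real (Cfeat \<rho> P Pols \<phi> (h - 1)) / \<epsilon>)))"
proof
  fix h assume "h \<in> {2..H}"
  define k where "k = h - 1"
  have h: "h = Suc k" and "k \<ge> 1" "k < H"
    using \<open>h \<in> {2..H}\<close> by (auto simp: k_def)
  then have low_rank_k: "\<And>x a x'. pmf (P k x a) x' = \<phi> k x a \<bullet> \<psi> (Suc k) x'"
    using low_rank by blast
  have C1_le: "C1 \<rho> P Pols h \<le> of_nat CARD('a) * Cfeat \<rho> P Pols \<phi> (h - 1)"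
    using C1_le_card_mult_Cfeat[where P = P and \<phi> = \<phi>, OF low_rank_k \<open>k \<ge> 1\<close>] by (simp add: h)
  moreover have "Cov \<rho> P Pols h \<epsilon> \<le> ennreal (1 + 2 * sqrt (real CARD('a)
                     * enn2real (Cfeat \<rho> P Pols \<phi> (h - 1)) / \<epsilon>))"
    if "\<epsilon> > 0" "Cfeat \<rho> P Pols \<phi> (h - 1) \<noteq> \<top>" for \<epsilon>
  proof -
    have "of_nat CARD('a) * Cfeat \<rho> P Pols \<phi> (h - 1)
        = ennreal (real CARD('a) * enn2real (Cfeat \<rho> P Pols \<phi> (h - 1)))"
      using that(2) by (simp add: ennreal_of_nat_eq_real_of_nat ennreal_mult ennreal_enn2real_if)
    with C1_le show ?thesis
      using Cov_le_of_C1_le[OF nonempty that(1)] by simp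
  qed
  ultimately show "C1 \<rho> P Pols h \<le> of_nat CARD('a) * Cfeat \<rho> P Pols \<phi> (h - 1)
      \<and> (\<forall>\<epsilon>>0. Cfeat \<rho> P Pols \<phi> (h - 1) \<noteq> \<top> \<longrightarrow>
            Cov \<rho> P Pols h \<epsilon> \<le> ennreal (1 + 2 * sqrt (real CARD('a)
                                      * enn2real (Cfeat \<rho> P Pols \<phi> (h - 1)) / \<epsilon>)))"
    by blast
qed

end
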